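(* Let $G=\langle a,t\mid ta^2t^{-1}=a^3\rangle$ be the Baumslag--Solitar group $BS(2,3)$ with generating set $\{a,t\}$. Then the growth rate of $G$ is bounded below by $\frac{1+\sqrt{13}}{2}$.
   Context: For a group $G$ generated by a finite set $S$, let $\gamma(n)=\#\{x\in G:\|x\|_S\leq n\}$, where $\|\cdot\|_S$ is the word length with respect to $S\cup S^{-1}$. The growth rate of $G$ with respect to $S$ is $\lim_{n\to\infty}\gamma(n)^{1/n}$. *)

theory Defs
  imports Complex_Main
begin

text \<open>The Baumslag--Solitar group BS(2,3) = < a, t | t a^2 t^-1 = a^3 >,
  realised as words over the letters a, a^-1, t, t^-1 modulo the congruence
  generated by free cancellation and the defining relator.\<close>

datatype gen = A | T

type_synonym letter = "gen \<times> bool"   \<comment> \<open>(g, True) = g, (g, False) = g^-1\<close>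
type_synonym word = "letter list"

definition inv_letter :: "letter \<Rightarrow> letter" where
  "inv_letter x = (fst x, \<not> snd x)"

definition inv_word :: "word \<Rightarrow> word" where
  "inv_word w = rev (map inv_letter w)"

definition bs_relator :: word where
  "bs_relator = [(T,True),(A,True),(A,True),(T,False),(A,False),(A,False),(A,False)]"

definition bs_trivial :: "word set" where
  "bs_trivial = {[x, inv_letter x] | x. True} \<union> {bs_relator, inv_word bs_relator}"

inductive bs_eq :: "word \<Rightarrow> word \<Rightarrow> bool" where
  bs_refl: "bs_eq w w"
| bs_sym: "bs_eq u v \<Longrightarrow> bs_eq v u"
| bs_trans: "bs_eq u v \<Longrightarrow> bs_eq v w \<Longrightarrow> bs_eq u w"
| bs_del: "r \<in> bs_trivial \<Longrightarrow> bs_eq (u @ r @ v) (u @ v)"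

definition bs_rel :: "(word \<times> word) set" where
  "bs_rel = {(u, v). bs_eq u v}"

definition BS23 :: "word set set" where
  "BS23 = UNIV // bs_rel"

definition bs_word_length :: "word set \<Rightarrow> nat" where
  "bs_word_length x = (LEAST k. \<exists>w \<in> x. length w = k)"

definition bs_growth :: "nat \<Rightarrow> nat" where
  "bs_growth n = card {x \<in> BS23. bs_word_length x \<le> n}"

end

theory Submission
  imports Defs
begin

text \<open>The growth function of any finitely generated group is submultiplicative, so by
  Fekete's lemma \<gamma>(n)^(1/n) converges. For the lower bound, BS(2,3) acts on Britton normal
  forms a^k t^(\<plusminus>1) a^r1 ... t^(\<plusminus>1) a^rm (residues taken from fixed coset representatives of
  \<langle>a^2\<rangle> and \<langle>a^3\<rangle>, no pinches); since this action respects the defining relations,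
  distinct reduced forms are distinct group elements. A family of reduced forms of word
  length n whose size c(n) satisfies c(n+2) = c(n+1) + 3 c(n) thus injects into the ball of
  radius n, and c(n) \<ge> \<rho>^(n-1) for the positive root \<rho> = (1 + \<surd>13)/2 of \<rho>^2 = \<rho> + 3.\<close>

section \<open>Fekete's lemma and exponential growth rates\<close>

lemma subadditive_iterate:
  fixes u :: "nat \<Rightarrow> real"
  assumes subadd: "\<And>m n. u (m + n) \<le> u m + u n"
  shows "u (q * m + r) \<le> real q * u m + u r"
proof (induction q)
  case (Suc q)
  have "u (Suc q * m + r) = u (m + (q * m + r))" by (simp add: algebra_simps)
  also have "\<dots> \<le> u m + u (q * m + r)" by (rule subadd)
  also have "\<dots> \<le> u m + (real q * u m + u r)" using Suc by simp
  finally show ?case by (simp add: algebra_simps)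
qed simp

lemma subadditive_div_le:
  fixes u :: "nat \<Rightarrow> real"
  assumes subadd: "\<And>m n. u (m + n) \<le> u m + u n" and nonneg: "\<And>n. 0 \<le> u n"
    and "0 < m" "0 < n"
  shows "u n / real n \<le> u m / real m + (\<Sum>r<m. u r) / real n"
proof -
  define q where "q = n div m"
  define r where "r = n mod m"
  have n: "n = q * m + r" by (simp add: q_def r_def)
  have "r < m" using \<open>0 < m\<close> by (simp add: r_def)
  then have ur: "u r \<le> (\<Sum>r<m. u r)" using nonneg by (intro member_le_sum) auto
  have "real q * real m \<le> real n" using n by (metis le_add1 of_nat_le_iff of_nat_mult)
  then have "real q * u m \<le> real n * (u m / real m)"
    using \<open>0 < m\<close> nonneg[of m]
    by (simp add: field_simps) (metis mult.commute mult.left_commute mult_right_mono)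
  moreover have "u n \<le> real q * u m + u r" using subadditive_iterate[of u, OF subadd, of q m r] n by simp
  ultimately have "u n \<le> real n * (u m / real m) + (\<Sum>r<m. u r)" using ur by linarith
  then show ?thesis using \<open>0 < n\<close> by (simp add: field_simps)
qed

lemma fekete_subadditive:
  fixes u :: "nat \<Rightarrow> real"
  assumes subadd: "\<And>m n. u (m + n) \<le> u m + u n" and nonneg: "\<And>n. 0 \<le> u n"
  shows "(\<lambda>n. u n / real n) \<longlonglongrightarrow> (INF n\<in>{1..}. u n / real n)"
proof (rule LIMSEQ_I)
  define l where "l = (INF n\<in>{1..}. u n / real n)"
  have bdd: "bdd_below ((\<lambda>n. u n / real n) ` {1..})"
    by (rule bdd_belowI[of _ 0]) (auto simp: nonneg)
  fix e :: real assume "0 < e"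
  have "\<exists>m\<in>{1..}. u m / real m < l + e / 2"
    unfolding l_def using bdd \<open>0 < e\<close> by (subst cINF_less_iff[symmetric]) (auto simp: l_def)
  then obtain m where m: "m \<ge> 1" "u m / real m < l + e / 2" by auto
  define C where "C = (\<Sum>r<m. u r)"
  obtain N :: nat where N: "2 * C / e < real N" using reals_Archimedean2 by blast
  have "norm (u n / real n - l) < e" if "Suc N \<le> n" for n
  proof -
    have "l \<le> u n / real n" unfolding l_def using bdd that by (intro cINF_lower) auto
    moreover have "C / real n < e / 2"
    proof -
      have "2 * C < e * real N" using N \<open>0 < e\<close> by (simp add: field_simps)
      also have "\<dots> \<le> e * real n" using that \<open>0 < e\<close> by simp
      finally show ?thesis using that by (simp add: field_simps)
    qed
    moreover have "u n / real n \<le> u m / real m + C / real n"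
      unfolding C_def using that m by (intro subadditive_div_le[of u, OF subadd nonneg, of m n]) auto
    ultimately have "u n / real n - l < e" "0 \<le> u n / real n - l" using m by linarith+
    then show ?thesis by simp
  qed
  then show "\<exists>no. \<forall>n\<ge>no. norm (u n / real n - (INF n\<in>{1..}. u n / real n)) < e"
    unfolding l_def by blast
qed

lemma submultiplicative_root_convergent:
  fixes g :: "nat \<Rightarrow> real"
  assumes ge1: "\<And>n. 1 \<le> g n" and submult: "\<And>m n. g (m + n) \<le> g m * g n"
  shows "convergent (\<lambda>n. g n powr (1 / real n))"
proof -
  have pos: "0 < g n" for n using ge1[of n] by linarith
  have "ln (g (m + n)) \<le> ln (g m) + ln (g n)" for m n
  proof -
    have "ln (g (m + n)) \<le> ln (g m * g n)" using submult[of m n] pos by simp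
    then show ?thesis using pos[of m] pos[of n] by (simp add: ln_mult)
  qed
  moreover have "0 \<le> ln (g n)" for n using ge1[of n] by simp
  ultimately have "(\<lambda>n. exp (ln (g n) / real n)) \<longlonglongrightarrow> exp (INF n\<in>{1..}. ln (g n) / real n)"
    by (intro tendsto_exp fekete_subadditive)
  moreover have "exp (ln (g n) / real n) = g n powr (1 / real n)" for n
    using pos[of n] by (simp add: powr_def)
  ultimately show ?thesis by (auto simp: convergent_def)
qed

lemma root_limit_ge_geometric:
  fixes g :: "nat \<Rightarrow> real"
  assumes lim: "(\<lambda>n. g n powr (1 / real n)) \<longlonglongrightarrow> L"
    and "0 < c" "0 < r" and lower: "\<And>n. c * r ^ n \<le> g n"
  shows "r \<le> L"
proof -
  have "(\<lambda>n. c powr (1 / real n) * r) \<longlonglongrightarrow> c powr 0 * r"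
    using \<open>0 < c\<close> by (intro tendsto_intros) (auto simp: lim_1_over_n)
  then have lim_lower: "(\<lambda>n. c powr (1 / real n) * r) \<longlonglongrightarrow> r"
    using \<open>0 < c\<close> by simp
  have "c powr (1 / real n) * r \<le> g n powr (1 / real n)" if "1 \<le> n" for n
  proof -
    have "c powr (1 / real n) * r = (c * r ^ n) powr (1 / real n)"
      using that \<open>0 < c\<close> \<open>0 < r\<close>
      by (simp add: powr_mult powr_realpow [symmetric] powr_powr)
    also have "\<dots> \<le> g n powr (1 / real n)"
      using lower \<open>0 < c\<close> \<open>0 < r\<close> by (intro powr_mono2) auto
    finally show ?thesis .
  qed
  then show ?thesis by (intro LIMSEQ_le[OF lim_lower lim]) auto
qed

section \<open>Balls in quotients of free monoids\<close>

definition word_ball :: "('a list \<times> 'a list) set \<Rightarrow> nat \<Rightarrow> 'a list set set" where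
  "word_ball R n = (\<lambda>w. R `` {w}) ` {w. length w \<le> n}"

lemma quotient_length_le_eq_word_ball:
  assumes R: "equiv UNIV R"
  shows "{x \<in> UNIV // R. (LEAST k. \<exists>w\<in>x. length w = k) \<le> n} = word_ball R n"
proof safe
  fix x assume x: "x \<in> UNIV // R" and le: "(LEAST k. \<exists>w\<in>x. length w = k) \<le> n"
  then obtain w0 where x_eq: "x = R `` {w0}" by (auto elim: quotientE)
  then have "\<exists>k. \<exists>w\<in>x. length w = k" using equiv_class_self[OF R UNIV_I] by blast
  then have "\<exists>w\<in>x. length w = (LEAST k. \<exists>w\<in>x. length w = k)" by (rule LeastI_ex)
  then obtain w where w: "w \<in> x" "length w = (LEAST k. \<exists>w\<in>x. length w = k)" ..
  then have "x = R `` {w}" using x_eq equiv_class_eq[OF R] by auto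
  then show "x \<in> word_ball R n" using w le by (auto simp: word_ball_def)
next
  fix x assume "x \<in> word_ball R n"
  then obtain w where x: "x = R `` {w}" and "length w \<le> n" by (auto simp: word_ball_def)
  moreover have "w \<in> x" using equiv_class_self[OF R UNIV_I] x by blast
  ultimately show "(LEAST k. \<exists>w\<in>x. length w = k) \<le> n" by (metis (mono_tags, lifting) Least_le le_trans)
next
  fix x assume "x \<in> word_ball R n"
  then show "x \<in> UNIV // R" by (auto simp: word_ball_def quotientI)
qed

lemma finite_word_ball: "finite (word_ball (R :: ('a::finite list \<times> 'a list) set) n)"
  unfolding word_ball_def
  by (rule finite_imageI) (use finite_lists_length_le[OF finite_UNIV, of n] in simp)

lemma card_word_ball_add_le:
  fixes R :: "('a::finite list \<times> 'a list) set"
  assumes R: "equiv UNIV R"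
    and append_right: "\<And>u v w. (u, v) \<in> R \<Longrightarrow> (u @ w, v @ w) \<in> R"
    and append_left: "\<And>u v w. (u, v) \<in> R \<Longrightarrow> (w @ u, w @ v) \<in> R"
  shows "card (word_ball R (m + n)) \<le> card (word_ball R m) * card (word_ball R n)"
proof -
  define rep where "rep X = (SOME w. w \<in> X)" for X :: "'a list set"
  have rep: "(u, rep (R `` {u})) \<in> R" for u
  proof -
    have "u \<in> R `` {u}" using equiv_class_self[OF R UNIV_I] .
    then have "rep (R `` {u}) \<in> R `` {u}" unfolding rep_def by (rule someI)
    then show ?thesis by simp
  qed
  define concat_classes where
    "concat_classes = (\<lambda>(X, Y). R `` {rep X @ rep Y})"
  have "word_ball R (m + n) \<subseteq> concat_classes ` (word_ball R m \<times> word_ball R n)"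
  proof
    fix x assume "x \<in> word_ball R (m + n)"
    then obtain w where x: "x = R `` {w}" and "length w \<le> m + n" by (auto simp: word_ball_def)
    define u v where "u = take m w" and "v = drop m w"
    have "(R `` {u}, R `` {v}) \<in> word_ball R m \<times> word_ball R n"
      using \<open>length w \<le> m + n\<close> by (auto simp: word_ball_def u_def v_def)
    moreover have "(u @ v, rep (R `` {u}) @ rep (R `` {v})) \<in> R"
      using R append_right[OF rep[of u]] append_left[OF rep[of v]] by (meson equivE transD)
    then have "x = concat_classes (R `` {u}, R `` {v})"
      using R by (simp add: x concat_classes_def u_def v_def equiv_class_eq)
    ultimately show "x \<in> concat_classes ` (word_ball R m \<times> word_ball R n)" by blast
  qed
  then have "card (word_ball R (m + n)) \<le> card (concat_classes ` (word_ball R m \<times> word_ball R n))"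
    by (intro card_mono) (auto simp: finite_word_ball)
  also have "\<dots> \<le> card (word_ball R m \<times> word_ball R n)"
    by (rule card_image_le) (simp add: finite_word_ball)
  finally show ?thesis by (simp add: card_cartesian_product)
qed

instance gen :: finite
proof
  have UNIV_gen: "(UNIV :: gen set) = {A, T}" using gen.exhaust by auto
  show "finite (UNIV :: gen set)" unfolding UNIV_gen by simp
qed

lemma equiv_bs_rel: "equiv UNIV bs_rel"
  unfolding equiv_def refl_on_def sym_def trans_def bs_rel_def
  by (auto intro: bs_eq.intros)

lemma bs_eq_append_right: "bs_eq u v \<Longrightarrow> bs_eq (u @ w) (v @ w)"
proof (induction rule: bs_eq.induct)
  case (bs_del r u v) then show ?case using bs_eq.bs_del[of r u "v @ w"] by simp
qed (auto intro: bs_eq.intros)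

lemma bs_eq_append_left: "bs_eq u v \<Longrightarrow> bs_eq (w @ u) (w @ v)"
proof (induction rule: bs_eq.induct)
  case (bs_del r u v) then show ?case using bs_eq.bs_del[of r "w @ u" v] by simp
qed (auto intro: bs_eq.intros)

lemma bs_growth_eq_card_word_ball: "bs_growth n = card (word_ball bs_rel n)"
  using quotient_length_le_eq_word_ball[OF equiv_bs_rel, of n]
  by (simp add: bs_growth_def BS23_def bs_word_length_def)

lemma bs_growth_pos: "0 < bs_growth n"
  unfolding bs_growth_eq_card_word_ball
  by (metis (mono_tags) card_gt_0_iff empty_iff finite_word_ball word_ball_def
      image_eqI list.size(3) mem_Collect_eq zero_le)

lemma bs_growth_add_le: "bs_growth (m + n) \<le> bs_growth m * bs_growth n"
  unfolding bs_growth_eq_card_word_ball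
  by (rule card_word_ball_add_le[OF equiv_bs_rel]) (auto simp: bs_rel_def bs_eq_append_right bs_eq_append_left)

section \<open>Normal forms in BS(2,3)\<close>

type_synonym syllable = "bool \<times> int"
type_synonym normal_form = "int \<times> syllable list"

text \<open>The normal form (k, [(e1, r1), ..., (em, rm)]) stands for
  a^k t^(\<plusminus>1) a^r1 ... t^(\<plusminus>1) a^rm, the sign of the i-th t being + iff ei.
  The residues are coset representatives: {0, 1} for \<langle>a^2\<rangle> after t and {-1, 0, 1} for
  \<langle>a^3\<rangle> after t^-1; reducedness excludes the pinches t a^0 t^-1 and t^-1 a^0 t.
  t_mult rewrites t a^(2q + r) as a^(3q) t a^r, cancelling t against a following t^-1
  when r = 0; t_inv_mult does the same with t^-1 a^(3q + r) = a^(2q) t^-1 a^r.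
  Words act on normal forms from the left, so the last letter of a word acts first.\<close>

definition residue_ok :: "syllable \<Rightarrow> bool" where
  "residue_ok x = (if fst x then snd x \<in> {0, 1} else snd x \<in> {-1, 0, 1})"

fun reduced :: "syllable list \<Rightarrow> bool" where
  "reduced [] = True"
| "reduced (x # L) \<longleftrightarrow>
     residue_ok x \<and> (snd x = 0 \<longrightarrow> (case L of [] \<Rightarrow> True | y # _ \<Rightarrow> fst y = fst x)) \<and> reduced L"

definition t_mult :: "normal_form \<Rightarrow> normal_form" where
  "t_mult s = (case s of (k, L) \<Rightarrow>
     (if k mod 2 = 0 \<and> L \<noteq> [] \<and> \<not> fst (hd L) then (3 * (k div 2) + snd (hd L), tl L)
      else (3 * (k div 2), (True, k mod 2) # L)))"

definition t_inv_mult :: "normal_form \<Rightarrow> normal_form" where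
  "t_inv_mult s = (case s of (k, L) \<Rightarrow>
     (if k - 3 * ((k + 1) div 3) = 0 \<and> L \<noteq> [] \<and> fst (hd L)
      then (2 * ((k + 1) div 3) + snd (hd L), tl L)
      else (2 * ((k + 1) div 3), (False, k - 3 * ((k + 1) div 3)) # L)))"

fun letter_act :: "letter \<Rightarrow> normal_form \<Rightarrow> normal_form" where
  "letter_act (A, True) (k, L) = (k + 1, L)"
| "letter_act (A, False) (k, L) = (k - 1, L)"
| "letter_act (T, True) s = t_mult s"
| "letter_act (T, False) s = t_inv_mult s"

definition word_act :: "word \<Rightarrow> normal_form \<Rightarrow> normal_form" where
  "word_act w s = foldr letter_act w s"

lemma word_act_append: "word_act (u @ v) s = word_act u (word_act v s)"
  by (simp add: word_act_def)

lemma reduced_Cons_iff: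
  "reduced ((e, r) # L) \<longleftrightarrow> residue_ok (e, r) \<and> (r = 0 \<longrightarrow> L = [] \<or> fst (hd L) = e) \<and> reduced L"
  by (cases L) auto

lemma t_mult_cancel: "t_mult (2 * q, (False, r) # L) = (3 * q + r, L)"
  by (simp add: t_mult_def)

lemma t_mult_push:
  assumes "r \<in> {0, 1}" and "\<not> (r = 0 \<and> L \<noteq> [] \<and> \<not> fst (hd L))"
  shows "t_mult (2 * q + r, L) = (3 * q, (True, r) # L)"
proof -
  have "(2 * q + r) div 2 = q" "(2 * q + r) mod 2 = r" using \<open>r \<in> {0, 1}\<close> by auto
  then show ?thesis unfolding t_mult_def using assms(2) by (simp only: prod.case) auto
qed

lemma t_inv_mult_cancel: "t_inv_mult (3 * q, (True, r) # L) = (2 * q + r, L)"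
proof -
  have "(3 * q + 1) div 3 = q" by simp
  then show ?thesis by (simp add: t_inv_mult_def)
qed

lemma t_inv_mult_push:
  assumes "r \<in> {-1, 0, 1}" and "\<not> (r = 0 \<and> L \<noteq> [] \<and> fst (hd L))"
  shows "t_inv_mult (3 * q + r, L) = (2 * q, (False, r) # L)"
proof -
  have q: "(3 * q + r + 1) div 3 = q" using \<open>r \<in> {-1, 0, 1}\<close> by auto
  then have "3 * q + r - 3 * ((3 * q + r + 1) div 3) = r" by simp
  then show ?thesis unfolding t_inv_mult_def using assms(2) by (simp only: prod.case q) auto
qed

lemma t_mult_cases:
  assumes cancel: "\<And>q r L'. k = 2 * q \<Longrightarrow> L = (False, r) # L' \<Longrightarrow> P (3 * q + r, L')"
    and push: "\<And>q r. k = 2 * q + r \<Longrightarrow> r \<in> {0, 1} \<Longrightarrow> \<not> (r = 0 \<and> L \<noteq> [] \<and> \<not> fst (hd L))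
      \<Longrightarrow> P (3 * q, (True, r) # L)"
  shows "P (t_mult (k, L))"
proof -
  define q r where "q = k div 2" and "r = k mod 2"
  have k: "k = 2 * q + r" and r: "r \<in> {0, 1}" by (auto simp: q_def r_def)
  show ?thesis
  proof (cases "r = 0 \<and> L \<noteq> [] \<and> \<not> fst (hd L)")
    case True
    then obtain r' L' where L: "L = (False, r') # L'" by (cases L) auto
    then show ?thesis using cancel[OF _ L] True k t_mult_cancel by simp
  next
    case False
    then show ?thesis using push[OF k r False] t_mult_push[OF r False] k by simp
  qed
qed

lemma t_inv_mult_cases:
  assumes cancel: "\<And>q r L'. k = 3 * q \<Longrightarrow> L = (True, r) # L' \<Longrightarrow> P (2 * q + r, L')"
    and push: "\<And>q r. k = 3 * q + r \<Longrightarrow> r \<in> {-1, 0, 1} \<Longrightarrow> \<not> (r = 0 \<and> L \<noteq> [] \<and> fst (hd L))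
      \<Longrightarrow> P (2 * q, (False, r) # L)"
  shows "P (t_inv_mult (k, L))"
proof -
  define q r where "q = (k + 1) div 3" and "r = k - 3 * q"
  have k: "k = 3 * q + r" and r: "r \<in> {-1, 0, 1}" by (auto simp: q_def r_def)
  show ?thesis
  proof (cases "r = 0 \<and> L \<noteq> [] \<and> fst (hd L)")
    case True
    then obtain r' L' where L: "L = (True, r') # L'" by (cases L) auto
    then show ?thesis using cancel[OF _ L] True k t_inv_mult_cancel by simp
  next
    case False
    then show ?thesis using push[OF k r False] t_inv_mult_push[OF r False] k by simp
  qed
qed

lemma reduced_t_mult: "reduced L \<Longrightarrow> reduced (snd (t_mult (k, L)))"
  by (rule t_mult_cases) (auto simp: residue_ok_def split: list.splits)

lemma reduced_t_inv_mult: "reduced L \<Longrightarrow> reduced (snd (t_inv_mult (k, L)))"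
  by (rule t_inv_mult_cases) (auto simp: residue_ok_def split: list.splits)

lemma t_inv_mult_t_mult: "reduced L \<Longrightarrow> t_inv_mult (t_mult (k, L)) = (k, L)"
proof (rule t_mult_cases)
  fix q r L' assume "reduced L" "k = 2 * q" "L = (False, r) # L'"
  moreover have "r \<in> {-1, 0, 1}" "\<not> (r = 0 \<and> L' \<noteq> [] \<and> fst (hd L'))"
    using calculation by (auto simp: residue_ok_def split: list.splits)
  ultimately show "t_inv_mult (3 * q + r, L') = (k, L)" using t_inv_mult_push by simp
qed (simp add: t_inv_mult_cancel)

lemma t_mult_t_inv_mult: "reduced L \<Longrightarrow> t_mult (t_inv_mult (k, L)) = (k, L)"
proof (rule t_inv_mult_cases)
  fix q r L' assume "reduced L" "k = 3 * q" "L = (True, r) # L'"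
  moreover have "r \<in> {0, 1}" "\<not> (r = 0 \<and> L' \<noteq> [] \<and> \<not> fst (hd L'))"
    using calculation by (auto simp: residue_ok_def split: list.splits)
  ultimately show "t_mult (2 * q + r, L') = (k, L)" using t_mult_push by simp
qed (simp add: t_mult_cancel)

lemma reduced_letter_act: "reduced (snd s) \<Longrightarrow> reduced (snd (letter_act x s))"
  using reduced_t_mult reduced_t_inv_mult by (cases s; cases x; cases "fst x"; cases "snd x") auto

lemma reduced_word_act: "reduced (snd s) \<Longrightarrow> reduced (snd (word_act w s))"
  by (induction w arbitrary: s) (auto simp: word_act_def intro: reduced_letter_act)

lemma letter_act_inv_letter: "reduced (snd s) \<Longrightarrow> letter_act (inv_letter x) (letter_act x s) = s"
  using t_inv_mult_t_mult t_mult_t_inv_mult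
  by (cases s; cases x; cases "fst x"; cases "snd x") (auto simp: inv_letter_def)

lemma word_act_inv_word: "reduced (snd s) \<Longrightarrow> word_act (inv_word w) (word_act w s) = s"
proof (induction w arbitrary: s)
  case (Cons x w)
  have "word_act (inv_word (x # w)) (word_act (x # w) s)
      = word_act (inv_word w) (letter_act (inv_letter x) (letter_act x (word_act w s)))"
    by (simp add: inv_word_def word_act_def)
  also have "\<dots> = word_act (inv_word w) (word_act w s)"
    using Cons.prems reduced_word_act letter_act_inv_letter by metis
  also have "\<dots> = s" using Cons by blast
  finally show ?case .
qed (simp add: word_act_def inv_word_def)

lemma word_act_relator: "reduced L \<Longrightarrow> word_act bs_relator (k, L) = (k, L)"
proof -
  assume L_red: "reduced L"
  have act: "word_act bs_relator (k, L)
      = t_mult (fst (t_inv_mult (k - 3, L)) + 2, snd (t_inv_mult (k - 3, L)))"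
    by (cases "t_inv_mult (k - 3, L)") (simp add: word_act_def bs_relator_def add.commute)
  obtain q r where qr: "k - 3 = 3 * q + r" "r \<in> {-1, 0, 1}"
  proof
    show "k - 3 = 3 * ((k - 2) div 3) + (k - 3 - 3 * ((k - 2) div 3))" by simp
    show "k - 3 - 3 * ((k - 2) div 3) \<in> {-1, 0, 1}" by auto
  qed
  show ?thesis
  proof (cases "r = 0 \<and> L \<noteq> [] \<and> fst (hd L)")
    case True
    then obtain r' L' where L: "L = (True, r') # L'" "r = 0" by (cases L) auto
    have r': "r' \<in> {0, 1}" "\<not> (r' = 0 \<and> L' \<noteq> [] \<and> \<not> fst (hd L'))"
      using L_red L by (auto simp: residue_ok_def split: list.splits)
    have "t_inv_mult (k - 3, L) = (2 * q + r', L')" using qr L t_inv_mult_cancel by simp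
    then have "word_act bs_relator (k, L) = t_mult (2 * (q + 1) + r', L')"
      using act by (simp add: algebra_simps)
    also have "\<dots> = (3 * (q + 1), (True, r') # L')" using t_mult_push[OF r'] by blast
    finally show ?thesis using qr L by simp
  next
    case False
    have "t_inv_mult (k - 3, L) = (2 * q, (False, r) # L)" using qr t_inv_mult_push[OF qr(2) False] by simp
    then have "word_act bs_relator (k, L) = t_mult (2 * (q + 1), (False, r) # L)"
      using act by (simp add: algebra_simps)
    also have "\<dots> = (3 * (q + 1) + r, L)" by (rule t_mult_cancel)
    finally show ?thesis using qr by simp
  qed
qed

lemma word_act_trivial:
  assumes "r \<in> bs_trivial" and s: "reduced (snd s)"
  shows "word_act r s = s"
proof -
  have "letter_act x (letter_act (inv_letter x) s) = s" for x
    using letter_act_inv_letter[OF s, of "inv_letter x"] by (simp add: inv_letter_def)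
  moreover have "word_act bs_relator s = s" using word_act_relator[of "snd s" "fst s"] s by simp
  ultimately show ?thesis
    using assms word_act_inv_word[OF s, of bs_relator] by (auto simp: bs_trivial_def word_act_def)
qed

lemma bs_eq_word_act: "bs_eq u v \<Longrightarrow> reduced (snd s) \<Longrightarrow> word_act u s = word_act v s"
proof (induction arbitrary: s rule: bs_eq.induct)
  case (bs_del r u v)
  then show ?case using word_act_trivial reduced_word_act by (simp add: word_act_append)
qed auto

definition a_power :: "int \<Rightarrow> word" where
  "a_power r = replicate (nat \<bar>r\<bar>) (A, r > 0)"

fun syllables_word :: "syllable list \<Rightarrow> word" where
  "syllables_word [] = []"
| "syllables_word ((e, r) # L) = (T, e) # a_power r @ syllables_word L"

lemma word_act_a_power: "word_act (a_power r) (k, L) = (k + r, L)"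
proof -
  have "word_act (replicate n (A, b)) (k, L) = (if b then k + int n else k - int n, L)" for n b
    by (induction n) (auto simp: word_act_def)
  then show ?thesis by (auto simp: a_power_def)
qed

lemma letter_act_t_syllable:
  assumes "reduced ((e, r) # L)"
  shows "letter_act (T, e) (r, L) = (0, (e, r) # L)"
proof (cases e)
  case True
  then have "r \<in> {0, 1}" "\<not> (r = 0 \<and> L \<noteq> [] \<and> \<not> fst (hd L))"
    using assms unfolding reduced_Cons_iff by (auto simp: residue_ok_def)
  then show ?thesis using t_mult_push[of r L 0] True by simp
next
  case False
  then have "r \<in> {-1, 0, 1}" "\<not> (r = 0 \<and> L \<noteq> [] \<and> fst (hd L))"
    using assms unfolding reduced_Cons_iff by (auto simp: residue_ok_def)
  then show ?thesis using t_inv_mult_push[of r L 0] False by simp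
qed

lemma word_act_syllables_word: "reduced L \<Longrightarrow> word_act (syllables_word L) (0, []) = (0, L)"
proof (induction L)
  case (Cons x L)
  obtain e r where x: "x = (e, r)" by (cases x)
  have "reduced L" using Cons.prems by simp
  have "word_act (syllables_word (x # L)) (0, [])
      = letter_act (T, e) (word_act (a_power r) (word_act (syllables_word L) (0, [])))"
    unfolding x word_act_def by simp
  also have "\<dots> = letter_act (T, e) (r, L)"
    using Cons.IH[OF \<open>reduced L\<close>] word_act_a_power[of r 0 L] by simp
  also have "\<dots> = (0, x # L)" using letter_act_t_syllable Cons.prems x by simp
  finally show ?case .
qed (simp add: word_act_def)

lemma syllables_word_bs_eq_imp_eq:
  assumes "reduced L" "reduced L'" "bs_eq (syllables_word L) (syllables_word L')"
  shows "L = L'"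
  using bs_eq_word_act[OF assms(3), of "(0, [])"] assms(1,2) by (simp add: word_act_syllables_word)

section \<open>Counting normal forms\<close>

text \<open>A family of reduced forms whose words have length n: a form of length n + 2 is
  either t^(\<plusminus>1) prepended to a form of length n + 1 (the sign copied from its first
  syllable, to keep it reduced), or one of t a, t^-1 a, t^-1 a^-1 prepended to a form of length n.\<close>

definition prepend_t :: "syllable list \<Rightarrow> syllable list" where
  "prepend_t L = (case L of [] \<Rightarrow> [(True, 0)] | y # _ \<Rightarrow> (fst y, 0) # L)"

fun counted_forms :: "nat \<Rightarrow> syllable list set" where
  "counted_forms 0 = {[]}"
| "counted_forms (Suc 0) = {[(True, 0)]}"
| "counted_forms (Suc (Suc n)) = prepend_t ` counted_forms (Suc n)
     \<union> ((#) (True, 1) ` counted_forms n \<union> ((#) (False, 1) ` counted_forms n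
     \<union> (#) (False, -1) ` counted_forms n))"

lemma counted_forms_reduced:
  "L \<in> counted_forms n \<Longrightarrow> reduced L \<and> length (syllables_word L) = n"
proof (induction n arbitrary: L rule: counted_forms.induct)
  case 2 then show ?case by (simp add: residue_ok_def a_power_def)
next
  case (3 n)
  from "3.prems" consider
      (prepend) L' where "L' \<in> counted_forms (Suc n)" "L = prepend_t L'"
    | (syllable) L' x where "L' \<in> counted_forms n" "L = x # L'" "x \<in> {(True, 1), (False, 1), (False, -1)}"
    by auto
  then show ?case
  proof cases
    case prepend
    then have IH: "reduced L' \<and> length (syllables_word L') = Suc n" using "3.IH"(1) by blast
    obtain e where L: "L = (e, 0) # L'" and "L' = [] \<or> fst (hd L') = e"
      using prepend by (cases L') (auto simp: prepend_t_def)
    then show ?thesis using IH unfolding L reduced_Cons_iff by (simp add: residue_ok_def a_power_def)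
  next
    case syllable
    then have "reduced L' \<and> length (syllables_word L') = n" using "3.IH"(2) by blast
    then show ?thesis using syllable by (auto simp: residue_ok_def a_power_def)
  qed
qed simp

lemma finite_counted_forms: "finite (counted_forms n)"
  by (induction n rule: counted_forms.induct) auto

lemma card_counted_forms:
  "card (counted_forms (Suc (Suc n))) = card (counted_forms (Suc n)) + 3 * card (counted_forms n)"
proof -
  have "inj prepend_t" by (auto simp: inj_def prepend_t_def split: list.splits)
  then have prepend: "card (prepend_t ` counted_forms (Suc n)) = card (counted_forms (Suc n))"
    by (simp add: card_image inj_on_subset)
  have cons: "card ((#) x ` counted_forms n) = card (counted_forms n)" for x :: syllable
    by (simp add: card_image)
  have disjoint_prepend: "prepend_t ` M \<inter> (#) x ` M' = {}" if "snd x \<noteq> 0" for M M' x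
    using that by (auto simp: prepend_t_def split: list.splits)
  have disjoint_cons: "(#) x ` M \<inter> (#) y ` M' = {}" if "x \<noteq> y" for M M' and x y :: syllable
    using that by auto
  show ?thesis
    by (simp add: card_Un_disjoint finite_counted_forms prepend cons Int_Un_distrib
        disjoint_prepend disjoint_cons del: One_nat_def)
qed

lemma card_counted_forms_ge:
  fixes r :: real
  assumes r: "r\<^sup>2 = r + 3" "1 \<le> r"
  shows "r ^ n \<le> r * card (counted_forms n)"
proof -
  have "r ^ n \<le> r * card (counted_forms n) \<and> r ^ Suc n \<le> r * card (counted_forms (Suc n))"
  proof (induction n)
    case (Suc n)
    have "r ^ Suc (Suc n) = r\<^sup>2 * r ^ n" by (simp add: power2_eq_square)
    also have "\<dots> = r ^ Suc n + 3 * r ^ n" using r(1) by (simp add: algebra_simps)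
    also have "\<dots> \<le> r * card (counted_forms (Suc n)) + 3 * (r * card (counted_forms n))"
      using Suc.IH by linarith
    also have "\<dots> = r * card (counted_forms (Suc (Suc n)))"
      by (simp add: card_counted_forms algebra_simps del: counted_forms.simps)
    finally show ?case using Suc.IH by simp
  qed (use r in simp)
  then show ?thesis ..
qed

lemma bs_growth_ge:
  fixes r :: real
  assumes "r\<^sup>2 = r + 3" "1 \<le> r"
  shows "r ^ n \<le> r * bs_growth n"
proof -
  define element where "element L = bs_rel `` {syllables_word L}" for L
  have "element ` counted_forms n \<subseteq> word_ball bs_rel n"
    using counted_forms_reduced by (auto simp: element_def word_ball_def)
  moreover have "inj_on element (counted_forms n)"
  proof (rule inj_onI)
    fix L L' assume "L \<in> counted_forms n" "L' \<in> counted_forms n" "element L = element L'"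
    moreover from this(3) have "bs_eq (syllables_word L) (syllables_word L')"
      using eq_equiv_class_iff[OF equiv_bs_rel UNIV_I UNIV_I] by (simp add: element_def bs_rel_def)
    ultimately show "L = L'" using counted_forms_reduced syllables_word_bs_eq_imp_eq by blast
  qed
  ultimately have "card (counted_forms n) \<le> bs_growth n"
    unfolding bs_growth_eq_card_word_ball by (metis card_inj_on_le finite_word_ball)
  then have "r * card (counted_forms n) \<le> r * bs_growth n" using \<open>1 \<le> r\<close> by simp
  then show ?thesis using card_counted_forms_ge[OF assms, of n] by linarith
qed

theorem proposition5p2:
  shows "\<exists>L. (\<lambda>n. real (bs_growth n) powr (1 / real n)) \<longlonglongrightarrow> L
             \<and> L \<ge> (1 + sqrt 13) / 2"
proof -
  define r :: real where "r = (1 + sqrt 13) / 2"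
  have r: "r\<^sup>2 = r + 3" "1 \<le> r" by (auto simp: r_def power2_eq_square field_simps)
  have "convergent (\<lambda>n. real (bs_growth n) powr (1 / real n))"
    using bs_growth_pos bs_growth_add_le
    by (intro submultiplicative_root_convergent) (auto simp: Suc_le_eq simp flip: of_nat_mult)
  then obtain L where lim: "(\<lambda>n. real (bs_growth n) powr (1 / real n)) \<longlonglongrightarrow> L"
    by (auto simp: convergent_def)
  have lower: "(1 / r) * r ^ n \<le> real (bs_growth n)" for n
    using bs_growth_ge[OF r, of n] r by (simp add: field_simps)
  have "r \<le> L" using r by (intro root_limit_ge_geometric[OF lim _ _ lower]) auto
  with lim show ?thesis unfolding r_def by blast
qed

end
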